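(* Let $J_1,J_2$ be Möbius involutions of $\overline{\mathbb{C}}$ and $q_1,q_2$ polynomials of degree $d+1$. If the correspondences $J_1\circ\mathrm{Cov}_0^{q_1}$ and $J_2\circ\mathrm{Cov}_0^{q_2}$ are conformally conjugate, then $J_1$ and $J_2$ are conformally conjugate, and $q_1$ and $q_2$ are conformal covering equivalent.
   Context: Correspondences are subsets of $\overline{\mathbb{C}}\times\overline{\mathbb{C}}$; composition $G\circ F=\{(z,w):\exists v,(z,v)\in F,(v,w)\in G\}$; a map is identified with its graph. Conformal conjugacy of correspondences $F_1,F_2$: $F_2=\phi\circ F_1\circ\phi^{-1}$ for a Möbius map $\phi$. Deleted covering correspondence of a rational $q$: $\mathrm{Cov}_0^q=\{(z,w):(q(z)-q(w))/(z-w)=0\}$ (i.e. $\{q(z)=q(w)\}$ with one copy of the diagonal removed). Rational maps $q_1,q_2$ are conformal covering equivalent if there are Möbius maps $\phi,\psi$ with $q_2=\psi\circ q_1\circ\phi$. *)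

theory Defs
  imports "HOL-Analysis.Analysis" "HOL-Computational_Algebra.Polynomial"
begin

text \<open>The Riemann sphere is modelled as complex option; None is the point at infinity.\<close>
type_synonym sphere = "complex option"

type_synonym corr = "(sphere \<times> sphere) set"

definition moeb :: "complex \<Rightarrow> complex \<Rightarrow> complex \<Rightarrow> complex \<Rightarrow> sphere \<Rightarrow> sphere" where
  "moeb a b c d z = (case z of
      None \<Rightarrow> (if c = 0 then None else Some (a / c))
    | Some x \<Rightarrow> (if c * x + d = 0 then None else Some ((a * x + b) / (c * x + d))))"

definition is_moebius :: "(sphere \<Rightarrow> sphere) \<Rightarrow> bool" where
  "is_moebius f \<longleftrightarrow> (\<exists>a b c d. a * d - b * c \<noteq> 0 \<and> f = moeb a b c d)"

definition moebius_involution :: "(sphere \<Rightarrow> sphere) \<Rightarrow> bool" where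
  "moebius_involution J \<longleftrightarrow> is_moebius J \<and> J \<circ> J = id \<and> J \<noteq> id"

definition graph :: "(sphere \<Rightarrow> sphere) \<Rightarrow> corr" where
  "graph f = {(z, f z) | z. True}"

definition corr_comp :: "corr \<Rightarrow> corr \<Rightarrow> corr" where
  "corr_comp G F = {(z, w). \<exists>v. (z, v) \<in> F \<and> (v, w) \<in> G}"

definition corr_conf_conj :: "corr \<Rightarrow> corr \<Rightarrow> bool" where
  "corr_conf_conj F1 F2 \<longleftrightarrow>
     (\<exists>\<phi>. is_moebius \<phi> \<and> F2 = corr_comp (graph \<phi>) (corr_comp F1 (graph (inv \<phi>))))"

definition map_conf_conj :: "(sphere \<Rightarrow> sphere) \<Rightarrow> (sphere \<Rightarrow> sphere) \<Rightarrow> bool" where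
  "map_conf_conj f1 f2 \<longleftrightarrow> (\<exists>\<phi>. is_moebius \<phi> \<and> f2 = \<phi> \<circ> f1 \<circ> inv \<phi>)"

definition poly_sphere :: "complex poly \<Rightarrow> sphere \<Rightarrow> sphere" where
  "poly_sphere q z = (case z of None \<Rightarrow> None | Some x \<Rightarrow> Some (poly q x))"

text \<open>Deleted covering correspondence: zero set in the sphere squared of the difference
  quotient (q(z)-q(w))/(z-w), which on the diagonal equals q'(z); at infinity the
  point (\<infinity>,\<infinity>) lies on it exactly when deg q \<ge> 2 (infinity is then a critical point).\<close>
definition Cov0 :: "complex poly \<Rightarrow> corr" where
  "Cov0 q = {(Some z, Some w) | z w. poly q z = poly q w \<and> (z \<noteq> w \<or> poly (pderiv q) z = 0)}
            \<union> (if degree q \<ge> 2 then {(None, None)} else {})"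

definition conf_cov_equiv :: "complex poly \<Rightarrow> complex poly \<Rightarrow> bool" where
  "conf_cov_equiv q1 q2 \<longleftrightarrow>
     (\<exists>\<phi> \<psi>. is_moebius \<phi> \<and> is_moebius \<psi> \<and> poly_sphere q2 = \<psi> \<circ> poly_sphere q1 \<circ> \<phi>)"

end

theory Submission
  imports Defs "HOL-Computational_Algebra.Fundamental_Theorem_Algebra"
begin

text \<open>A Moebius involution has trace zero; moving its two fixed points to 0 and \<infinity>
  conjugates it to z \<mapsto> -z, so any two involutions are conjugate.

  Unwinding the conjugacy \<phi> shows that \<phi> \<times> (J2\<inverse> \<circ> \<phi> \<circ> J1) maps Cov0 q1 onto Cov0 q2.
  In degree at most 2 every polynomial is affinely a shifted power l (z - c)^n + m, so there is
  nothing to prove. In degree n \<ge> 3, if \<phi> fixes \<infinity> it is affine, and q2 \<circ> \<phi> is constant on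
  every fibre of q1 with at least three points; interpolating on a fibre with n points gives
  q2 \<circ> \<phi> = l q1 + m. If \<phi> moves \<infinity>, the fibre of q2 through \<phi>(\<infinity>) is a single point, so q2
  is a shifted power, and by the same argument for \<phi>\<inverse> so is q1.\<close>

section \<open>Moebius transformations\<close>

lemma moeb_comp:
  assumes "a*d - b*c \<noteq> 0" "a'*d' - b'*c' \<noteq> 0"
  shows "moeb a b c d \<circ> moeb a' b' c' d'
    = moeb (a*a' + b*c') (a*b' + b*d') (c*a' + d*c') (c*b' + d*d')"
proof
  fix z
  show "(moeb a b c d \<circ> moeb a' b' c' d') z
    = moeb (a*a' + b*c') (a*b' + b*d') (c*a' + d*c') (c*b' + d*d') z"
  proof (cases z)
    case None
    show ?thesis
    proof (cases "c' = 0")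
      case True
      then have "a' \<noteq> 0" using assms(2) by auto
      then show ?thesis using None True by (auto simp: moeb_def)
    next
      case False
      have "c * a'/c' + d = (c*a' + d*c')/c'" "a * a'/c' + b = (a*a' + b*c')/c'"
        using False by (simp_all add: field_simps)
      then show ?thesis using None False by (auto simp: moeb_def)
    qed
  next
    case (Some x)
    have num: "(a*a' + b*c')*x + (a*b' + b*d') = a*(a'*x + b') + b*(c'*x + d')"
      and den: "(c*a' + d*c')*x + (c*b' + d*d') = c*(a'*x + b') + d*(c'*x + d')"
      by (simp_all add: algebra_simps)
    show ?thesis
    proof (cases "c'*x + d' = 0")
      case True
      have "a'*d' - b'*c' = a'*(c'*x + d') - c'*(a'*x + b')" by (simp add: algebra_simps)
      then have "a'*x + b' \<noteq> 0" using True assms(2) by auto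
      then show ?thesis using Some True num den by (auto simp: moeb_def)
    next
      case False
      have "c * (a'*x + b') / (c'*x + d') + d = (c*(a'*x + b') + d*(c'*x + d')) / (c'*x + d')"
        "a * (a'*x + b') / (c'*x + d') + b = (a*(a'*x + b') + b*(c'*x + d')) / (c'*x + d')"
        using False by (simp_all add: field_simps)
      then show ?thesis using Some False num den by (auto simp: moeb_def)
    qed
  qed
qed

lemma moeb_scale:
  assumes "k \<noteq> 0"
  shows "moeb (k*a) (k*b) (k*c) (k*d) = moeb a b c d"
proof -
  have "k*c*x + k*d = k*(c*x + d)" "k*a*x + k*b = k*(a*x + b)" for x
    by (simp_all add: algebra_simps)
  then show ?thesis using assms by (auto simp: fun_eq_iff moeb_def split: option.splits)
qed

lemma moeb_scalar: "k \<noteq> 0 \<Longrightarrow> moeb k 0 0 k = id"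
  by (auto simp: fun_eq_iff moeb_def split: option.splits)

lemma moeb_eq_id_imp:
  assumes "moeb a b c d = id"
  shows "b = 0 \<and> c = 0 \<and> a = d"
proof -
  have "moeb a b c d None = None" "moeb a b c d (Some 0) = Some 0" "moeb a b c d (Some 1) = Some 1"
    using assms by simp_all
  then show ?thesis by (auto simp: moeb_def split: if_splits)
qed

lemma moeb_inverse:
  assumes "a*d - b*c \<noteq> 0"
  shows "bij (moeb a b c d)" "inv (moeb a b c d) = moeb d (-b) (-c) a"
proof -
  have det': "d*a - (-b)*(-c) \<noteq> 0" using assms by (simp add: algebra_simps)
  have "moeb a b c d \<circ> moeb d (-b) (-c) a = id" "moeb d (-b) (-c) a \<circ> moeb a b c d = id"
    using moeb_comp[OF assms det'] moeb_comp[OF det' assms] moeb_scalar[OF assms]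
    by (simp_all add: algebra_simps)
  then show "bij (moeb a b c d)" "inv (moeb a b c d) = moeb d (-b) (-c) a"
    using o_bij inv_unique_comp by blast+
qed

lemma is_moebius_bij: "is_moebius f \<Longrightarrow> bij f"
  unfolding is_moebius_def using moeb_inverse by blast

lemma is_moebius_inv:
  assumes "is_moebius f"
  shows "is_moebius (inv f)"
proof -
  obtain a b c d where det: "a*d - b*c \<noteq> 0" and f: "f = moeb a b c d"
    using assms unfolding is_moebius_def by blast
  moreover have "d*a - (-b)*(-c) \<noteq> 0" using det by (simp add: algebra_simps)
  ultimately show ?thesis using moeb_inverse(2) unfolding is_moebius_def by metis
qed

lemma is_moebius_comp:
  assumes "is_moebius f" "is_moebius g"
  shows "is_moebius (f \<circ> g)"
proof -
  obtain a b c d a' b' c' d' where det: "a*d - b*c \<noteq> 0" "a'*d' - b'*c' \<noteq> 0"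
    and fg: "f = moeb a b c d" "g = moeb a' b' c' d'"
    using assms unfolding is_moebius_def by blast
  have "(a*a' + b*c')*(c*b' + d*d') - (a*b' + b*d')*(c*a' + d*c') = (a*d - b*c)*(a'*d' - b'*c')"
    by (simp add: algebra_simps)
  then have "(a*a' + b*c')*(c*b' + d*d') - (a*b' + b*d')*(c*a' + d*c') \<noteq> 0" using det by simp
  then show ?thesis unfolding fg moeb_comp[OF det] is_moebius_def by blast
qed

lemma is_moebius_fixing_infinity:
  assumes "is_moebius f" "f None = None"
  obtains a b where "a \<noteq> 0" "\<And>x. f (Some x) = Some (a*x + b)"
proof -
  obtain a b c d where det: "a*d - b*c \<noteq> 0" and f: "f = moeb a b c d"
    using assms(1) unfolding is_moebius_def by blast
  then have "c = 0" using assms(2) by (auto simp: moeb_def split: if_splits)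
  then have "a/d \<noteq> 0" "f (Some x) = Some ((a/d)*x + b/d)" for x
    using det unfolding f by (auto simp: moeb_def add_divide_distrib)
  then show ?thesis using that by blast
qed

section \<open>Moebius involutions\<close>

lemma moeb_involution_trace_zero:
  assumes det: "a*d - b*c \<noteq> 0"
    and invol: "moeb a b c d \<circ> moeb a b c d = id" and nontrivial: "moeb a b c d \<noteq> id"
  shows "d = -a"
proof (rule ccontr)
  assume "d \<noteq> -a"
  then have trace: "a + d \<noteq> 0" by (simp add: add_eq_0_iff)
  have "b*(a + d) = 0" "c*(a + d) = 0" "(a - d)*(a + d) = 0"
    using moeb_eq_id_imp[OF invol[unfolded moeb_comp[OF det det]]] by (simp_all add: algebra_simps)
  then have "b = 0" "c = 0" "a = d" using trace by auto
  then have "moeb a b c d = id" using det moeb_scalar by simp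
  with nontrivial show False ..
qed

text \<open>In both cases P maps 0 and \<infinity> to the two fixed points of the involution.\<close>

lemma moeb_trace_zero_conj_neg:
  assumes det: "a*(-a) - b*c \<noteq> 0"
  obtains P where "is_moebius P" "moeb a b c (-a) \<circ> P = P \<circ> moeb (-1) 0 0 1"
proof -
  have detN: "(-1)*1 - 0*0 \<noteq> (0::complex)" by simp
  show ?thesis
  proof (cases "b = 0")
    case False
    define r where "r = csqrt (a*a + b*c)"
    have rr: "r*r = a*a + b*c" unfolding r_def by (metis power2_csqrt power2_eq_square)
    have "a*(-a) - b*c = -(r*r)" using rr by (simp add: algebra_simps)
    then have "r \<noteq> 0" using det by auto
    then have detP: "b*(r - a) - b*(-r - a) \<noteq> 0" using False by (simp add: algebra_simps)
    define P where "P = moeb b b (-r - a) (r - a)"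
    have "moeb a b c (-a) \<circ> P = moeb (r*(-b)) (r*b) (r*(r + a)) (r*(r - a))"
      unfolding P_def moeb_comp[OF det detP] using rr
      by (intro arg_cong4[where f=moeb]) (simp_all add: algebra_simps)
    also have "\<dots> = moeb (-b) b (r + a) (r - a)" using moeb_scale \<open>r \<noteq> 0\<close> by blast
    also have "\<dots> = P \<circ> moeb (-1) 0 0 1" unfolding P_def moeb_comp[OF detP detN]
      by (intro arg_cong4[where f=moeb]) (simp_all add: algebra_simps)
    finally show ?thesis using that detP unfolding P_def is_moebius_def by blast
  next
    case True
    then have "a \<noteq> 0" using det by auto
    have detP: "0*c - (2*a)*1 \<noteq> 0" using \<open>a \<noteq> 0\<close> by simp
    define P where "P = moeb 0 (2*a) 1 c"
    have "moeb a b c (-a) \<circ> P = moeb (a*0) (a*(2*a)) (a*(-1)) (a*c)"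
      unfolding P_def moeb_comp[OF det detP] using True
      by (intro arg_cong4[where f=moeb]) (simp_all add: algebra_simps)
    also have "\<dots> = moeb 0 (2*a) (-1) c" using moeb_scale \<open>a \<noteq> 0\<close> by (metis mult_minus1_right)
    also have "\<dots> = P \<circ> moeb (-1) 0 0 1" unfolding P_def moeb_comp[OF detP detN]
      by (intro arg_cong4[where f=moeb]) (simp_all add: algebra_simps)
    finally show ?thesis using that detP unfolding P_def is_moebius_def by blast
  qed
qed

lemma map_conf_conj_sym:
  assumes "map_conf_conj f g"
  shows "map_conf_conj g f"
proof -
  obtain \<phi> where \<phi>: "is_moebius \<phi>" "g = \<phi> \<circ> f \<circ> inv \<phi>"
    using assms unfolding map_conf_conj_def by blast
  have "bij \<phi>" using \<phi>(1) by (rule is_moebius_bij)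
  then have "f = inv \<phi> \<circ> g \<circ> inv (inv \<phi>)"
    unfolding \<phi>(2) by (simp add: inv_inv_eq bij_is_inj o_assoc)
  then show ?thesis using is_moebius_inv[OF \<phi>(1)] unfolding map_conf_conj_def by blast
qed

lemma map_conf_conj_trans:
  assumes "map_conf_conj f g" "map_conf_conj g h"
  shows "map_conf_conj f h"
proof -
  obtain \<phi> \<psi> where \<phi>: "is_moebius \<phi>" "g = \<phi> \<circ> f \<circ> inv \<phi>"
    and \<psi>: "is_moebius \<psi>" "h = \<psi> \<circ> g \<circ> inv \<psi>"
    using assms unfolding map_conf_conj_def by blast
  have "inv (\<psi> \<circ> \<phi>) = inv \<phi> \<circ> inv \<psi>"
    using o_inv_distrib is_moebius_bij \<phi>(1) \<psi>(1) by blast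
  then have "h = (\<psi> \<circ> \<phi>) \<circ> f \<circ> inv (\<psi> \<circ> \<phi>)" unfolding \<psi>(2) \<phi>(2) by (simp add: o_assoc)
  then show ?thesis using is_moebius_comp[OF \<psi>(1) \<phi>(1)] unfolding map_conf_conj_def by blast
qed

lemma moebius_involution_conj_neg:
  assumes "moebius_involution J"
  shows "map_conf_conj (moeb (-1) 0 0 1) J"
proof -
  obtain a b c d where det: "a*d - b*c \<noteq> 0" and J: "J = moeb a b c d"
    using assms unfolding moebius_involution_def is_moebius_def by blast
  have "d = -a"
    using moeb_involution_trace_zero[OF det] assms unfolding moebius_involution_def J by blast
  then obtain P where P: "is_moebius P" "J \<circ> P = P \<circ> moeb (-1) 0 0 1"
    using moeb_trace_zero_conj_neg det unfolding J by metis
  have "bij P" using P(1) by (rule is_moebius_bij)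
  then have "J = P \<circ> moeb (-1) 0 0 1 \<circ> inv P"
    using P(2) by (metis bij_is_surj comp_id o_assoc surj_iff)
  then show ?thesis using P(1) unfolding map_conf_conj_def by blast
qed

lemma moebius_involutions_conf_conj:
  "moebius_involution J1 \<Longrightarrow> moebius_involution J2 \<Longrightarrow> map_conf_conj J1 J2"
  using map_conf_conj_sym map_conf_conj_trans moebius_involution_conj_neg by blast

section \<open>Correspondences\<close>

lemma corr_comp_graph_left: "corr_comp (graph f) C = map_prod id f ` C"
  unfolding corr_comp_def graph_def by force

lemma corr_comp_graph_inv_right:
  assumes "bij g"
  shows "corr_comp C (graph (inv g)) = map_prod g id ` C"
  unfolding corr_comp_def graph_def
  using assms by (force simp: bij_is_inj bij_is_surj surj_f_inv_f image_iff)

lemma corr_conj_graph_comp_imp_image: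
  assumes "bij J2" "bij \<phi>"
    and "corr_comp (graph J2) C2
      = corr_comp (graph \<phi>) (corr_comp (corr_comp (graph J1) C1) (graph (inv \<phi>)))"
  shows "C2 = map_prod \<phi> (inv J2 \<circ> \<phi> \<circ> J1) ` C1"
proof -
  have "map_prod id J2 ` C2 = map_prod \<phi> (\<phi> \<circ> J1) ` C1"
    using assms(3) unfolding corr_comp_graph_left corr_comp_graph_inv_right[OF assms(2)]
    by (simp add: image_comp map_prod_compose[symmetric])
  then have "map_prod id (inv J2) ` map_prod id J2 ` C2
      = map_prod id (inv J2) ` map_prod \<phi> (\<phi> \<circ> J1) ` C1"
    by simp
  then show ?thesis
    using assms(1)
    by (simp add: image_comp map_prod_compose[symmetric] bij_is_inj o_assoc prod.map_id0)
qed

lemma map_prod_image_inv: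
  assumes "inj f" "inj g" "B = map_prod f g ` A"
  shows "A = map_prod (inv f) (inv g) ` B"
  using assms by (simp add: image_comp map_prod_compose[symmetric] prod.map_id0)

lemma Cov0_None_left: "(None, w) \<in> Cov0 q \<Longrightarrow> w = None"
  unfolding Cov0_def by (auto split: if_splits)

lemma Cov0_None_right: "(z, None) \<in> Cov0 q \<Longrightarrow> z = None"
  unfolding Cov0_def by (auto split: if_splits)

lemma Cov0_Some_left: "(Some x, w) \<in> Cov0 q \<Longrightarrow> \<exists>y. w = Some y \<and> poly q x = poly q y"
  unfolding Cov0_def by (auto split: if_splits)

lemma Cov0_SomeI: "poly q x = poly q y \<Longrightarrow> x \<noteq> y \<Longrightarrow> (Some x, Some y) \<in> Cov0 q"
  unfolding Cov0_def by auto

lemma Cov0_critI: "poly (pderiv q) x = 0 \<Longrightarrow> (Some x, Some x) \<in> Cov0 q"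
  unfolding Cov0_def by auto

lemma Cov0_NoneI: "degree q \<ge> 2 \<Longrightarrow> (None, None) \<in> Cov0 q"
  unfolding Cov0_def by auto

section \<open>Fibres of polynomials\<close>

lemma degree_diff_const:
  fixes p :: "'a::comm_ring poly"
  assumes "degree p \<ge> 1"
  shows "degree (p - [:c:]) = degree p"
proof -
  have "degree (p + - [:c:]) = degree p" using assms by (intro degree_add_eq_left) simp
  then show ?thesis by (metis diff_conv_add_uminus)
qed

lemma degree_le_card_fibre:
  fixes q :: "complex poly"
  assumes "\<And>w. poly q w = v \<Longrightarrow> poly (pderiv q) w \<noteq> 0"
  shows "degree q \<le> card {w. poly q w = v}"
proof (cases "degree q = 0")
  case False
  define Q where "Q = q - [:v:]"
  define R where "R = {w. poly Q w = 0}"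
  have R: "R = {w. poly q w = v}" unfolding R_def Q_def by simp
  have "pderiv Q = pderiv q" unfolding Q_def by (simp add: pderiv_diff pderiv_pCons)
  then have rsf: "rsquarefree Q" unfolding rsquarefree_roots using assms Q_def by simp
  then have "Q \<noteq> 0" unfolding rsquarefree_def by simp
  then have fin: "finite R" unfolding R_def by (rule poly_roots_finite)
  have "degree q = degree Q" unfolding Q_def using False by (simp add: degree_diff_const)
  also have "\<dots> = degree (smult (lead_coeff Q) (\<Prod>w\<in>R. [:-w, 1:]))"
    using complex_poly_decompose_rsquarefree[OF rsf] unfolding R_def by simp
  also have "\<dots> \<le> degree (\<Prod>w\<in>R. [:-w, 1:])" by (rule degree_smult_le)
  also have "\<dots> \<le> sum (degree \<circ> (\<lambda>w. [:-w, 1:])) R" using degree_prod_sum_le[OF fin] .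
  also have "\<dots> = card R" by simp
  finally show ?thesis unfolding R .
qed simp

definition shifted_power :: "complex poly \<Rightarrow> complex \<Rightarrow> bool" where
  "shifted_power q c \<longleftrightarrow> (\<forall>x. poly q x = lead_coeff q * (x - c) ^ degree q + poly q c)"

lemma shifted_power_if_fibre_singleton:
  assumes "degree q \<ge> 1" and fibre: "\<And>w. poly q w = poly q c \<Longrightarrow> w = c"
  shows "shifted_power q c"
proof -
  define p where "p = q - [:poly q c:]"
  have pp: "poly p x = poly q x - poly q c" for x unfolding p_def by simp
  have degp: "degree p = degree q" unfolding p_def using assms(1) by (rule degree_diff_const)
  have lcp: "lead_coeff p = lead_coeff q"
    using degp assms(1) unfolding p_def by (cases "degree q") (auto simp: coeff_pCons)
  have "{z. poly p z = 0} = {c}" using fibre unfolding pp by auto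
  then have "p = smult (lead_coeff q) ([:-c, 1:] ^ order c p)"
    using complex_poly_decompose[of p] lcp by simp
  moreover have "lead_coeff q \<noteq> 0" using assms(1) by auto
  ultimately have "p = smult (lead_coeff q) ([:-c, 1:] ^ degree q)"
    using degp by (metis degree_linear_power degree_smult_eq)
  then have "poly p x = lead_coeff q * (x - c) ^ degree q" for x by (simp add: poly_power)
  then show ?thesis unfolding shifted_power_def by (metis pp diff_add_cancel)
qed

lemma poly_degree_2_expand:
  fixes q :: "complex poly"
  assumes "degree q = 2"
  shows "poly q x = coeff q 0 + coeff q 1 * x + coeff q 2 * x^2"
  using assms by (simp add: poly_altdef atMost_Suc numeral_2_eq_2 power2_eq_square)

lemma shifted_power_degree_1:
  fixes q :: "complex poly"
  assumes "degree q = 1"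
  shows "shifted_power q 0"
proof -
  have "poly q x = coeff q 0 + coeff q 1 * x" for x
    using assms by (simp add: poly_altdef atMost_Suc)
  then show ?thesis unfolding shifted_power_def using assms by simp
qed

lemma shifted_power_degree_2:
  fixes q :: "complex poly"
  assumes "degree q = 2"
  shows "shifted_power q (- coeff q 1 / (2 * coeff q 2))"
proof -
  define c where "c = - coeff q 1 / (2 * coeff q 2)"
  have "q \<noteq> 0" using assms by auto
  then have "coeff q 2 \<noteq> 0" using assms by (metis leading_coeff_0_iff)
  then have vertex: "coeff q 1 + 2 * coeff q 2 * c = 0" unfolding c_def by simp
  have "poly q x - (coeff q 2 * (x - c)^2 + poly q c) = (x - c) * (coeff q 1 + 2 * coeff q 2 * c)"
    for x unfolding poly_degree_2_expand[OF assms] by (simp add: algebra_simps power2_eq_square)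
  then have "poly q x = coeff q 2 * (x - c)^2 + poly q c" for x
    unfolding vertex by (metis mult_zero_right right_minus_eq)
  then show ?thesis unfolding shifted_power_def c_def[symmetric] assms by blast
qed

lemma conf_cov_equiv_affine:
  assumes "a \<noteq> 0" "l \<noteq> 0" "\<And>x. poly q2 (a*x + b) = l * poly q1 x + m"
  shows "conf_cov_equiv q1 q2"
proof -
  have "poly_sphere q2 = moeb l m 0 1 \<circ> poly_sphere q1 \<circ> moeb 1 (-b) 0 a"
  proof
    fix z
    show "poly_sphere q2 z = (moeb l m 0 1 \<circ> poly_sphere q1 \<circ> moeb 1 (-b) 0 a) z"
    proof (cases z)
      case (Some y)
      have "a * ((y - b)/a) + b = y" using assms(1) by simp
      then have "poly q2 y = l * poly q1 ((y - b)/a) + m" using assms(3)[of "(y - b)/a"] by simp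
      then show ?thesis using Some assms(1) by (simp add: moeb_def poly_sphere_def)
    qed (simp add: moeb_def poly_sphere_def)
  qed
  moreover have "1*a - (-b)*0 \<noteq> 0" "l*1 - m*0 \<noteq> 0" using assms(1,2) by simp_all
  ultimately show ?thesis unfolding conf_cov_equiv_def is_moebius_def by blast
qed

lemma conf_cov_equiv_shifted_powers:
  assumes deg: "degree q1 = degree q2" "degree q1 \<ge> 1"
    and "shifted_power q1 c1" "shifted_power q2 c2"
  shows "conf_cov_equiv q1 q2"
proof -
  define l where "l = lead_coeff q2 / lead_coeff q1"
  have "q1 \<noteq> 0" "q2 \<noteq> 0" using deg by auto
  then have "l \<noteq> 0" unfolding l_def by simp
  have "poly q2 (1*x + (c2 - c1)) = l * poly q1 x + (poly q2 c2 - l * poly q1 c1)" for x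
  proof -
    have p1: "poly q1 x = lead_coeff q1 * (x - c1) ^ degree q1 + poly q1 c1"
      using assms(3) unfolding shifted_power_def by blast
    have "poly q2 (1*x + (c2 - c1))
        = lead_coeff q2 * ((1*x + (c2 - c1)) - c2) ^ degree q2 + poly q2 c2"
      using assms(4) unfolding shifted_power_def by blast
    also have "\<dots> = lead_coeff q2 * (x - c1) ^ degree q1 + poly q2 c2" using deg(1) by simp
    finally show ?thesis unfolding p1 l_def using \<open>q1 \<noteq> 0\<close> by (simp add: field_simps)
  qed
  then show ?thesis using \<open>l \<noteq> 0\<close> by (intro conf_cov_equiv_affine[of 1 l]) simp_all
qed

lemma ex_fibre_card_ge_degree:
  fixes q :: "complex poly"
  assumes "degree q \<ge> 1"
  obtains c where "degree q \<le> card {x. poly q x = c}"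
proof -
  have "pderiv q \<noteq> 0" using assms by (simp add: pderiv_eq_0_iff)
  then have "finite (poly q ` {x. poly (pderiv q) x = 0})" using poly_roots_finite by blast
  then obtain c where "c \<notin> poly q ` {x. poly (pderiv q) x = 0}"
    using ex_new_if_finite[OF infinite_UNIV_char_0] by blast
  then show ?thesis using that degree_le_card_fibre[of q c] by blast
qed

lemma poly_affine_relation_if_constant_on_fibre:
  fixes p q :: "complex poly"
  assumes deg: "degree p = n" "degree q = n" "n \<ge> 1" and card: "n \<le> card {x. poly q x = c}"
    and const: "\<And>x y. poly q x = c \<Longrightarrow> poly q y = c \<Longrightarrow> poly p x = poly p y"
  shows "\<exists>l m. l \<noteq> 0 \<and> (\<forall>x. poly p x = l * poly q x + m)"
proof -
  define R where "R = {x. poly q x = c}"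
  have "card R \<noteq> 0" using card deg(3) unfolding R_def by linarith
  then have "R \<noteq> {}" by (metis card.empty)
  then obtain x0 where x0: "x0 \<in> R" by blast
  obtain k where k: "n = Suc k" using deg(3) by (cases n) auto
  have "p \<noteq> 0" "q \<noteq> 0" using deg by auto
  define l where "l = lead_coeff p / lead_coeff q"
  have "p - [:poly p x0:] = smult l (q - [:c:])"
  proof (rule poly_eqI_degree_lead_coeff[of _ n _ R])
    show "coeff (p - [:poly p x0:]) n = coeff (smult l (q - [:c:])) n"
      using deg leading_coeff_0_iff[of q] \<open>q \<noteq> 0\<close> unfolding k l_def by simp
    show "degree (p - [:poly p x0:]) \<le> n" "degree (smult l (q - [:c:])) \<le> n"
      using deg by (auto intro: degree_diff_le)
    show "poly (p - [:poly p x0:]) z = poly (smult l (q - [:c:])) z" if "z \<in> R" for z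
      using that x0 const[of z x0] unfolding R_def by simp
  qed (use card R_def in simp)
  then have "poly (p - [:poly p x0:]) x = poly (smult l (q - [:c:])) x" for x by (rule arg_cong)
  then have "poly p x - poly p x0 = l * (poly q x - c)" for x by simp
  then have "poly p x = l * poly q x + (poly p x0 - l * c)" for x
    by (simp add: algebra_simps)
  moreover have "l \<noteq> 0" unfolding l_def using \<open>p \<noteq> 0\<close> \<open>q \<noteq> 0\<close> by simp
  ultimately show ?thesis by blast
qed

text \<open>Two points of a fibre with at least three points share a third partner y, so p takes
  the value g y at both.\<close>

lemma poly_affine_relation_if_fibrewise:
  fixes p q :: "complex poly" and g :: "complex \<Rightarrow> complex"
  assumes deg: "degree p = n" "degree q = n" "n \<ge> 3"
    and fibrewise: "\<And>x y. poly q x = poly q y \<Longrightarrow> x \<noteq> y \<Longrightarrow> poly p x = g y"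
  shows "\<exists>l m. l \<noteq> 0 \<and> (\<forall>x. poly p x = l * poly q x + m)"
proof -
  obtain c where card: "n \<le> card {x. poly q x = c}"
    using ex_fibre_card_ge_degree[of q] deg by auto
  have "poly p x = poly p y" if "poly q x = c" "poly q y = c" for x y
  proof -
    have "\<not> {x. poly q x = c} \<subseteq> {x, y}"
    proof
      assume "{x. poly q x = c} \<subseteq> {x, y}"
      then have "card {x. poly q x = c} \<le> card {x, y}" by (simp add: card_mono)
      also have "\<dots> \<le> 2" by (simp add: card_insert_if)
      finally show False using card deg(3) by simp
    qed
    then obtain z where "poly q z = c" "z \<noteq> x" "z \<noteq> y" by blast
    then show ?thesis using that fibrewise by metis
  qed
  moreover have "n \<ge> 1" using deg(3) by simp
  ultimately show ?thesis by (intro poly_affine_relation_if_constant_on_fibre[OF deg(1,2) _ card])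
qed

section \<open>Rigidity of the deleted covering correspondence\<close>

text \<open>Only the point (\<infinity>, \<infinity>) of Cov0 q1 involves \<infinity>, so x0 = \<Phi> \<infinity> is related only to
  M \<infinity>: the fibre of q2 through x0 lies in {x0, M \<infinity>}, and a critical point in it forces
  the two points to coincide.\<close>

lemma shifted_power_at_image_of_infinity:
  fixes q1 q2 :: "complex poly" and \<Phi> M :: "sphere \<Rightarrow> sphere"
  assumes deg: "degree q1 \<ge> 2" "degree q2 \<ge> 3" and inj: "inj \<Phi>" "inj M"
    and Cov: "Cov0 q2 = map_prod \<Phi> M ` Cov0 q1" and x0: "\<Phi> None = Some x0"
  shows "shifted_power q2 x0"
proof -
  have "(Some x0, M None) \<in> Cov0 q2" using Cov Cov0_NoneI[OF deg(1)] x0 by force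
  then obtain y0 where y0: "M None = Some y0" using Cov0_Some_left by blast
  have partner: "u = Some y0" if u: "(Some x0, u) \<in> Cov0 q2" for u
  proof -
    obtain z v where zv: "(z, v) \<in> Cov0 q1" "\<Phi> z = Some x0" "M v = u"
      using u[unfolded Cov] by auto
    then have "z = None" using x0 inj(1) by (metis injD)
    then show ?thesis using zv y0 Cov0_None_left by blast
  qed
  have fibre: "w = x0 \<or> w = y0" if "poly q2 w = poly q2 x0" for w
    using partner[OF Cov0_SomeI[of q2 x0 w]] that by auto
  have "x0 = y0"
  proof (rule ccontr)
    assume "x0 \<noteq> y0"
    have "poly (pderiv q2) x0 \<noteq> 0" using partner[OF Cov0_critI] \<open>x0 \<noteq> y0\<close> by blast
    moreover have "poly (pderiv q2) y0 \<noteq> 0"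
    proof
      assume "poly (pderiv q2) y0 = 0"
      then obtain z v where zv: "(z, v) \<in> Cov0 q1" "\<Phi> z = Some y0" "M v = Some y0"
        using Cov0_critI[of q2 y0, unfolded Cov] by auto
      then have "v = None" using y0 inj(2) by (metis injD)
      then have "z = None" using zv(1) Cov0_None_right by blast
      then show False using zv(2) x0 \<open>x0 \<noteq> y0\<close> by simp
    qed
    ultimately have "degree q2 \<le> card {w. poly q2 w = poly q2 x0}"
      using fibre by (intro degree_le_card_fibre) blast
    also have "\<dots> \<le> card {x0, y0}" using fibre by (intro card_mono) auto
    also have "\<dots> \<le> 2" by (simp add: card_insert_if)
    finally show False using deg(2) by simp
  qed
  then show ?thesis using deg(2) fibre by (intro shifted_power_if_fibre_singleton) auto
qed

lemma conf_cov_equiv_if_Cov0_affine_image: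
  assumes deg: "degree q1 = n" "degree q2 = n" "n \<ge> 3" and "a \<noteq> 0"
    and Cov: "Cov0 q2 = map_prod \<phi> M ` Cov0 q1" and \<phi>: "\<And>x. \<phi> (Some x) = Some (a*x + b)"
  shows "conf_cov_equiv q1 q2"
proof -
  define p where "p = pcompose q2 [:b, a:]"
  have p: "poly p x = poly q2 (a*x + b)" for x
    unfolding p_def by (simp add: poly_pcompose algebra_simps)
  have "degree p = n" unfolding p_def using deg(2) \<open>a \<noteq> 0\<close> by (simp add: degree_pcompose)
  moreover have "poly p x = poly q2 (the (M (Some y)))"
    if "poly q1 x = poly q1 y" "x \<noteq> y" for x y
  proof -
    have "(Some (a*x + b), M (Some y)) \<in> Cov0 q2"
      using Cov Cov0_SomeI[OF that] \<phi> by (metis image_eqI map_prod_simp)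
    then show ?thesis unfolding p using Cov0_Some_left by fastforce
  qed
  ultimately obtain l m where "l \<noteq> 0" "\<And>x. poly p x = l * poly q1 x + m"
    using poly_affine_relation_if_fibrewise[where g="\<lambda>y. poly q2 (the (M (Some y)))"] deg(1,3)
    by metis
  then show ?thesis using conf_cov_equiv_affine[of a l q2 b q1 m] \<open>a \<noteq> 0\<close> p by simp
qed

lemma conf_cov_equiv_if_Cov0_image:
  assumes deg: "degree q1 = n" "degree q2 = n" "n \<ge> 1" and \<phi>: "is_moebius \<phi>" and "bij M"
    and Cov: "Cov0 q2 = map_prod \<phi> M ` Cov0 q1"
  shows "conf_cov_equiv q1 q2"
proof -
  have "bij \<phi>" using \<phi> by (rule is_moebius_bij)
  consider "n = 1" | "n = 2" | "n \<ge> 3" "\<phi> None = None" | x2 where "n \<ge> 3" "\<phi> None = Some x2"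
    using deg(3) by (cases "\<phi> None") force+
  then show ?thesis
  proof cases
    case 1
    then show ?thesis
      using conf_cov_equiv_shifted_powers[OF _ _ shifted_power_degree_1 shifted_power_degree_1] deg
      by simp
  next
    case 2
    then show ?thesis
      using conf_cov_equiv_shifted_powers[OF _ _ shifted_power_degree_2 shifted_power_degree_2] deg
      by simp
  next
    case 3
    obtain a b where "a \<noteq> 0" "\<And>x. \<phi> (Some x) = Some (a*x + b)"
      using is_moebius_fixing_infinity[OF \<phi> 3(2)] by blast
    then show ?thesis using conf_cov_equiv_if_Cov0_affine_image[OF deg(1,2) 3(1) _ Cov] by blast
  next
    case 4
    have injs: "inj \<phi>" "inj M" "inj (inv \<phi>)" "inj (inv M)"
      using \<open>bij \<phi>\<close> \<open>bij M\<close> by (simp_all add: bij_is_inj bij_imp_bij_inv)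
    have q2: "shifted_power q2 x2"
      using shifted_power_at_image_of_infinity[OF _ _ injs(1,2) Cov 4(2)] deg 4(1) by simp
    have Cov': "Cov0 q1 = map_prod (inv \<phi>) (inv M) ` Cov0 q2"
      using map_prod_image_inv[OF injs(1,2) Cov] .
    obtain x1 where x1: "inv \<phi> None = Some x1"
      using 4(2) bij_inv_eq_iff[OF \<open>bij \<phi>\<close>, of None None] by (cases "inv \<phi> None") auto
    have q1: "shifted_power q1 x1"
      using shifted_power_at_image_of_infinity[OF _ _ injs(3,4) Cov' x1] deg 4(1) by simp
    show ?thesis using conf_cov_equiv_shifted_powers[OF _ _ q1 q2] deg by simp
  qed
qed

theorem mainTheorem8:
  fixes J1 J2 :: "sphere \<Rightarrow> sphere" and q1 q2 :: "complex poly" and d :: nat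
  assumes "moebius_involution J1" and "moebius_involution J2"
    and "degree q1 = d + 1" and "degree q2 = d + 1"
    and "corr_conf_conj (corr_comp (graph J1) (Cov0 q1)) (corr_comp (graph J2) (Cov0 q2))"
  shows "map_conf_conj J1 J2 \<and> conf_cov_equiv q1 q2"
proof
  show "map_conf_conj J1 J2" using assms(1,2) by (rule moebius_involutions_conf_conj)
  obtain \<phi> where \<phi>: "is_moebius \<phi>" and conj: "corr_comp (graph J2) (Cov0 q2)
      = corr_comp (graph \<phi>) (corr_comp (corr_comp (graph J1) (Cov0 q1)) (graph (inv \<phi>)))"
    using assms(5) unfolding corr_conf_conj_def by blast
  have "bij J1" "bij J2" using assms(1,2) unfolding moebius_involution_def by (metis o_bij)+
  moreover have "bij \<phi>" using \<phi> by (rule is_moebius_bij)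
  ultimately have "Cov0 q2 = map_prod \<phi> (inv J2 \<circ> \<phi> \<circ> J1) ` Cov0 q1"
    and "bij (inv J2 \<circ> \<phi> \<circ> J1)"
    using corr_conj_graph_comp_imp_image[OF _ _ conj] by (auto intro: bij_comp bij_imp_bij_inv)
  then show "conf_cov_equiv q1 q2"
    using conf_cov_equiv_if_Cov0_image[OF assms(3,4) _ \<phi>] by simp
qed

end
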